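(* Let $\Omega\subset\mathbb{R}^n$ be a bounded simply connected open set with smooth boundary, $\sigma_0\in C^2(\overline{\Omega})$ with $\sigma_0>0$ on $\overline{\Omega}$, $f\in C^{2,\alpha}(\partial\Omega)$, and let $u_0$ solve $\nabla\cdot\sigma_0\nabla u_0=0$ in $\Omega$, $u_0|_{\partial\Omega}=f$, with $\nabla u_0\neq0$ on $\overline{\Omega}$. Fix $p>0$. For $h\in C^2(\overline{\Omega})$ set $\rho=h/\sigma_0$ and $$d F_{\sigma_0}(h)=h|\nabla u_0|^p+p|\nabla u_0|^{p-2}\sigma_0\nabla u_0\cdot\nabla v_0,$$ where $v_0$ solves $\nabla\cdot\sigma_0\nabla v_0=-\nabla\cdot(h\nabla u_0)$ in $\Omega$, $v_0|_{\partial\Omega}=0$. Then $$\sigma_0\,T_0\!\left(\frac{dF_{\sigma_0}(h)}{\sigma_0|\nabla u_0|^p}\right)=-L\,\Delta_{\sigma_0,D}^{-1}\big(\sigma_0T_0\rho\big),$$ where $T_0=\nabla u_0\cdot\nabla$, $\Delta_{\sigma_0,D}$ is the Dirichlet realization of $\Delta_{\sigma_0}=\nabla\cdot\sigma_0\nabla$ in $\Omega$, and $L$ is the differential operator $$Lv=-\nabla\cdot\sigma_0\nabla v+p\,\nabla\cdot\left(\sigma_0\frac{\nabla u_0\cdot\nabla v}{|\nabla u_0|^2}\nabla u_0\right).$$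
   Context: $dF_{\sigma_0}$ is the differential at $\sigma_0$ of $F(\sigma)=\sigma|\nabla u_\sigma|^p$, with $u_\sigma$ the $\sigma$-harmonic function with boundary data $f$; $h$ plays the role of $\sigma-\sigma_0$ and $\rho=(\sigma-\sigma_0)/\sigma_0$. *)

theory Defs
  imports "HOL-Analysis.Analysis"
begin

definition dpart :: "'a::euclidean_space \<Rightarrow> ('a \<Rightarrow> real) \<Rightarrow> 'a \<Rightarrow> real" where
  "dpart i u x = frechet_derivative u (at x) i"

definition grad :: "('a::euclidean_space \<Rightarrow> real) \<Rightarrow> 'a \<Rightarrow> 'a" where
  "grad u x = (\<Sum>i\<in>Basis. dpart i u x *\<^sub>R i)"

definition divg :: "('a::euclidean_space \<Rightarrow> 'a) \<Rightarrow> 'a \<Rightarrow> real" where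
  "divg F x = (\<Sum>i\<in>Basis. frechet_derivative F (at x) i \<bullet> i)"

fun Ck_on :: "nat \<Rightarrow> 'a::euclidean_space set \<Rightarrow> ('a \<Rightarrow> real) \<Rightarrow> bool" where
  "Ck_on 0 U u = continuous_on U u"
| "Ck_on (Suc k) U u = (continuous_on U u \<and> (\<forall>x\<in>U. u differentiable (at x)) \<and>
      (\<forall>i\<in>Basis. Ck_on k U (dpart i u)))"

definition smooth_on :: "'a::euclidean_space set \<Rightarrow> ('a \<Rightarrow> real) \<Rightarrow> bool" where
  "smooth_on U u = (\<forall>k. Ck_on k U u)"

text \<open>C^2(closure of an open bounded set): C^2 in the interior with all derivatives of
  order \<le> 2 uniformly continuous (equivalently, continuously extendable to the closure);
  the function itself is continuous on the closure.\<close>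
definition C2_closure :: "'a::euclidean_space set \<Rightarrow> ('a \<Rightarrow> real) \<Rightarrow> bool" where
  "C2_closure \<Omega> u = (Ck_on 2 \<Omega> u \<and> continuous_on (closure \<Omega>) u \<and>
      uniformly_continuous_on \<Omega> u \<and>
      (\<forall>i\<in>Basis. uniformly_continuous_on \<Omega> (dpart i u)) \<and>
      (\<forall>i\<in>Basis. \<forall>j\<in>Basis. uniformly_continuous_on \<Omega> (dpart j (dpart i u))))"

definition smooth_boundary :: "'a::euclidean_space set \<Rightarrow> bool" where
  "smooth_boundary \<Omega> = (\<forall>z\<in>frontier \<Omega>. \<exists>U \<phi>. open U \<and> z \<in> U \<and> smooth_on U \<phi> \<and>
      (\<forall>x\<in>U. grad \<phi> x \<noteq> 0) \<and> \<Omega> \<inter> U = {x\<in>U. \<phi> x < 0})"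

definition C2alpha_boundary :: "real \<Rightarrow> 'a::euclidean_space set \<Rightarrow> ('a \<Rightarrow> real) \<Rightarrow> bool" where
  "C2alpha_boundary \<alpha> \<Omega> f = (\<exists>F. Ck_on 2 UNIV F \<and>
      (\<forall>i\<in>Basis. \<forall>j\<in>Basis. \<exists>M. \<forall>x y.
          \<bar>dpart j (dpart i F) x - dpart j (dpart i F) y\<bar> \<le> M * dist x y powr \<alpha>) \<and>
      (\<forall>x\<in>frontier \<Omega>. F x = f x))"

definition sigma_lap :: "('a::euclidean_space \<Rightarrow> real) \<Rightarrow> ('a \<Rightarrow> real) \<Rightarrow> 'a \<Rightarrow> real" where
  "sigma_lap \<sigma> v x = divg (\<lambda>y. \<sigma> y *\<^sub>R grad v y) x"

text \<open>Classical solutions of the Dirichlet problem Delta_sigma w = g in Omega, w = 0 on the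
  boundary; w is normalised to vanish outside Omega so that it is a unique function.\<close>
definition dirichlet_sol :: "'a::euclidean_space set \<Rightarrow> ('a \<Rightarrow> real) \<Rightarrow> ('a \<Rightarrow> real) \<Rightarrow> ('a \<Rightarrow> real) \<Rightarrow> bool" where
  "dirichlet_sol \<Omega> \<sigma> g w = (Ck_on 2 \<Omega> w \<and> continuous_on (closure \<Omega>) w \<and>
      (\<forall>x\<in>\<Omega>. sigma_lap \<sigma> w x = g x) \<and> (\<forall>x. x \<notin> \<Omega> \<longrightarrow> w x = 0))"

definition dirichlet_inv :: "'a::euclidean_space set \<Rightarrow> ('a \<Rightarrow> real) \<Rightarrow> ('a \<Rightarrow> real) \<Rightarrow> 'a \<Rightarrow> real" where
  "dirichlet_inv \<Omega> \<sigma> g = (THE w. dirichlet_sol \<Omega> \<sigma> g w)"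

definition Top :: "('a::euclidean_space \<Rightarrow> real) \<Rightarrow> ('a \<Rightarrow> real) \<Rightarrow> 'a \<Rightarrow> real" where
  "Top u0 w x = grad u0 x \<bullet> grad w x"

definition Lop :: "('a::euclidean_space \<Rightarrow> real) \<Rightarrow> ('a \<Rightarrow> real) \<Rightarrow> real \<Rightarrow> ('a \<Rightarrow> real) \<Rightarrow> 'a \<Rightarrow> real" where
  "Lop \<sigma> u0 p v x = - divg (\<lambda>y. \<sigma> y *\<^sub>R grad v y) x
      + p * divg (\<lambda>y. (\<sigma> y * (grad u0 y \<bullet> grad v y) / (norm (grad u0 y))\<^sup>2) *\<^sub>R grad u0 y) x"

definition dF :: "('a::euclidean_space \<Rightarrow> real) \<Rightarrow> ('a \<Rightarrow> real) \<Rightarrow> real \<Rightarrow> ('a \<Rightarrow> real) \<Rightarrow> ('a \<Rightarrow> real) \<Rightarrow> 'a \<Rightarrow> real" where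
  "dF \<sigma> u0 p h v0 x = h x * norm (grad u0 x) powr p
      + p * norm (grad u0 x) powr (p - 2) * \<sigma> x * (grad u0 x \<bullet> grad v0 x)"

end

theory Submission
  imports Defs
begin

text \<open>
  Write \<open>\<rho> = h/\<sigma>0\<close>. Because \<open>\<nabla>\<cdot>(\<sigma>0\<nabla>u0) = 0\<close>, the product rule gives
  \<open>\<nabla>\<cdot>(h\<nabla>u0) = \<nabla>\<cdot>(\<rho>\<sigma>0\<nabla>u0) = \<sigma>0 T0 \<rho>\<close>, so \<open>-v0\<close> solves the Dirichlet problem
  \<open>\<nabla>\<cdot>(\<sigma>0\<nabla>w) = \<sigma>0 T0 \<rho>\<close>, \<open>w = 0\<close> on the boundary. The weak maximum principle, proved with
  an exponential barrier \<open>exp(\<gamma> x\<cdot>b)\<close>, makes this solution unique, so the inverse Dirichlet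
  operator on the right-hand side returns \<open>-v0\<close>. On the left,
  \<open>dF(h)/(\<sigma>0|\<nabla>u0|^p) = \<rho> + p R\<close> with \<open>R = \<nabla>u0\<cdot>\<nabla>v0/|\<nabla>u0|^2\<close>, and expanding \<open>L(-v0)\<close> with
  the product rule once more gives \<open>-\<sigma>0 T0 \<rho> - p \<sigma>0 T0 R\<close>.
\<close>

lemma frechet_derivative_cong_open:
  assumes "open S" "x \<in> S" "\<And>y. y \<in> S \<Longrightarrow> f y = g y"
  shows "frechet_derivative f (at x) = frechet_derivative g (at x)"
proof -
  have "(f has_derivative D) (at x) \<longleftrightarrow> (g has_derivative D) (at x)" for D
    using has_derivative_transform_within_open[OF _ assms(1,2), of f _ _ g]
      has_derivative_transform_within_open[OF _ assms(1,2), of g _ _ f] assms(3) by metis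
  then show ?thesis unfolding frechet_derivative_def by simp
qed

lemma dpart_cong_open:
  assumes "open S" "x \<in> S" "\<And>y. y \<in> S \<Longrightarrow> f y = g y"
  shows "dpart i f x = dpart i g x"
  unfolding dpart_def using frechet_derivative_cong_open[OF assms] by simp

lemma grad_cong_open:
  assumes "open S" "x \<in> S" "\<And>y. y \<in> S \<Longrightarrow> f y = g y"
  shows "grad f x = grad g x"
  unfolding grad_def using dpart_cong_open[OF assms] by simp

lemma divg_cong_open:
  assumes "open S" "x \<in> S" "\<And>y. y \<in> S \<Longrightarrow> F y = G y"
  shows "divg F x = divg G x"
  unfolding divg_def using frechet_derivative_cong_open[OF assms] by simp

lemma differentiable_cong_open:
  assumes "open S" "x \<in> S" "\<And>y. y \<in> S \<Longrightarrow> f y = g y" "f differentiable at x"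
  shows "g differentiable at x"
  using assms has_derivative_transform_within_open unfolding differentiable_def by metis

lemma sigma_lap_cong_open:
  assumes "open S" "x \<in> S" "\<And>y. y \<in> S \<Longrightarrow> f y = g y"
  shows "sigma_lap \<sigma> f x = sigma_lap \<sigma> g x"
  unfolding sigma_lap_def
  by (rule divg_cong_open[OF assms(1,2)]) (simp add: grad_cong_open[OF assms(1) _ assms(3)])

lemma Lop_cong_open:
  assumes "open S" "x \<in> S" "\<And>y. y \<in> S \<Longrightarrow> f y = g y"
  shows "Lop \<sigma> u p f x = Lop \<sigma> u p g x"
proof -
  have grad_eq: "grad f y = grad g y" if "y \<in> S" for y
    using grad_cong_open[OF assms(1) that assms(3)] .
  have "divg (\<lambda>y. \<sigma> y *\<^sub>R grad f y) x = divg (\<lambda>y. \<sigma> y *\<^sub>R grad g y) x"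
    by (rule divg_cong_open[OF assms(1,2)]) (simp add: grad_eq)
  moreover have "divg (\<lambda>y. (\<sigma> y * (grad u y \<bullet> grad f y) / (norm (grad u y))\<^sup>2) *\<^sub>R grad u y) x
      = divg (\<lambda>y. (\<sigma> y * (grad u y \<bullet> grad g y) / (norm (grad u y))\<^sup>2) *\<^sub>R grad u y) x"
    by (rule divg_cong_open[OF assms(1,2)]) (simp add: grad_eq)
  ultimately show ?thesis unfolding Lop_def by simp
qed

lemma Ck_on_cong:
  assumes "open U" "\<And>y. y \<in> U \<Longrightarrow> f y = g y" "Ck_on k U f"
  shows "Ck_on k U g"
  using assms(2,3)
proof (induction k arbitrary: f g)
  case 0
  have "continuous_on U f = continuous_on U g" by (rule continuous_on_cong[OF refl 0(1)])
  with 0 show ?case by simp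
next
  case (Suc k)
  have "Ck_on k U (dpart i g)" if "i \<in> Basis" for i
  proof (rule Suc.IH)
    show "Ck_on k U (dpart i f)" using Suc.prems(2) that by simp
    show "dpart i f y = dpart i g y" if "y \<in> U" for y
      using dpart_cong_open[OF assms(1) that Suc.prems(1)] .
  qed
  moreover have "continuous_on U f = continuous_on U g" by (rule continuous_on_cong[OF refl Suc(2)])
  moreover have "g differentiable at x" if "x \<in> U" for x
    using differentiable_cong_open[OF assms(1) that Suc.prems(1)] Suc.prems(2) that by simp
  ultimately show ?case using Suc.prems(2) by simp
qed

lemma Ck_on_2_differentiable:
  assumes "Ck_on 2 U f" "x \<in> U"
  shows "f differentiable at x" "\<And>i. i \<in> Basis \<Longrightarrow> dpart i f differentiable at x"
  using assms by (simp_all add: numeral_2_eq_2)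

lemma grad_eqI:
  fixes f :: "'a::euclidean_space \<Rightarrow> real"
  assumes "(f has_derivative (\<lambda>v. G \<bullet> v)) (at x)"
  shows "grad f x = G"
  using euclidean_representation[of G]
  unfolding grad_def dpart_def frechet_derivative_at[OF assms, symmetric] by simp

lemma inner_grad_Basis:
  fixes f :: "'a::euclidean_space \<Rightarrow> real"
  assumes "i \<in> Basis"
  shows "grad f x \<bullet> i = dpart i f x"
  using assms by (simp add: grad_def)

lemma has_derivative_grad:
  fixes f :: "'a::euclidean_space \<Rightarrow> real"
  assumes "f differentiable at x"
  shows "(f has_derivative (\<lambda>v. grad f x \<bullet> v)) (at x)"
proof -
  let ?D = "frechet_derivative f (at x)"
  have D: "(f has_derivative ?D) (at x)" using assms frechet_derivative_works by blast
  have "?D v = grad f x \<bullet> v" for v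
  proof -
    have "?D v = ?D (\<Sum>i\<in>Basis. (v \<bullet> i) *\<^sub>R i)" by (simp only: euclidean_representation)
    also have "\<dots> = (\<Sum>i\<in>Basis. (v \<bullet> i) * ?D i)"
      using has_derivative_linear[OF D] by (simp only: linear_sum linear_scale o_def real_scaleR_def)
    also have "\<dots> = grad f x \<bullet> v"
      unfolding grad_def dpart_def inner_sum_left inner_scaleR_left
      by (rule sum.cong) (auto simp: inner_commute)
    finally show ?thesis .
  qed
  then have "?D = (\<lambda>v. grad f x \<bullet> v)" by auto
  with D show ?thesis by simp
qed

lemma dpart_eq_inner_grad:
  fixes f :: "'a::euclidean_space \<Rightarrow> real"
  assumes "f differentiable at x"
  shows "dpart i f x = grad f x \<bullet> i"
  unfolding dpart_def frechet_derivative_at[OF has_derivative_grad[OF assms], symmetric] ..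

lemma grad_lincomb:
  fixes f g :: "'a::euclidean_space \<Rightarrow> real"
  assumes "f differentiable at x" "g differentiable at x"
  shows "grad (\<lambda>y. a * f y + b * g y) x = a *\<^sub>R grad f x + b *\<^sub>R grad g x"
proof (rule grad_eqI)
  show "((\<lambda>y. a * f y + b * g y) has_derivative
      (\<lambda>v. (a *\<^sub>R grad f x + b *\<^sub>R grad g x) \<bullet> v)) (at x)"
    using has_derivative_grad[OF assms(1)] has_derivative_grad[OF assms(2)]
    by (auto intro!: derivative_eq_intros simp: inner_add_left)
qed

lemma dpart_lincomb:
  fixes f g :: "'a::euclidean_space \<Rightarrow> real"
  assumes "f differentiable at x" "g differentiable at x"
  shows "dpart i (\<lambda>y. a * f y + b * g y) x = a * dpart i f x + b * dpart i g x"
  using assms by (simp add: dpart_eq_inner_grad grad_lincomb inner_add_left)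

lemma grad_neg:
  fixes f :: "'a::euclidean_space \<Rightarrow> real"
  assumes "f differentiable at x"
  shows "grad (\<lambda>y. - f y) x = - grad f x"
  using grad_lincomb[OF assms assms, of 0 "-1"] by simp

lemma differentiable_grad:
  fixes f :: "'a::euclidean_space \<Rightarrow> real"
  assumes "\<And>i. i \<in> Basis \<Longrightarrow> dpart i f differentiable at x"
  shows "grad f differentiable at x"
  unfolding grad_def[abs_def] using assms by (auto intro!: differentiable_sum differentiable_scaleR)

lemma divg_eqI:
  assumes "(F has_derivative D) (at x)"
  shows "divg F x = (\<Sum>i\<in>Basis. D i \<bullet> i)"
  using frechet_derivative_at[OF assms] unfolding divg_def by simp

lemma divg_scaleR:
  fixes \<phi> :: "'a::euclidean_space \<Rightarrow> real"
  assumes "\<phi> differentiable at x" "V differentiable at x"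
  shows "divg (\<lambda>y. \<phi> y *\<^sub>R V y) x = grad \<phi> x \<bullet> V x + \<phi> x * divg V x"
proof -
  let ?D = "frechet_derivative V (at x)"
  have "((\<lambda>y. \<phi> y *\<^sub>R V y) has_derivative (\<lambda>h. \<phi> x *\<^sub>R ?D h + (grad \<phi> x \<bullet> h) *\<^sub>R V x)) (at x)"
    using has_derivative_grad[OF assms(1)] assms(2) frechet_derivative_works
    by (blast intro: has_derivative_scaleR)
  then have "divg (\<lambda>y. \<phi> y *\<^sub>R V y) x
      = \<phi> x * (\<Sum>i\<in>Basis. ?D i \<bullet> i) + (\<Sum>i\<in>Basis. (grad \<phi> x \<bullet> i) * (V x \<bullet> i))"
    by (simp add: divg_eqI inner_add_left sum.distrib sum_distrib_left)
  then show ?thesis unfolding divg_def by (simp add: euclidean_inner[symmetric])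
qed

lemma divg_neg:
  assumes "F differentiable at x"
  shows "divg (\<lambda>y. - F y) x = - divg F x"
proof -
  have "((\<lambda>y. - F y) has_derivative (\<lambda>h. - frechet_derivative F (at x) h)) (at x)"
    using assms frechet_derivative_works has_derivative_minus by blast
  from divg_eqI[OF this] show ?thesis unfolding divg_def by (simp add: sum_negf)
qed

definition lap :: "('a::euclidean_space \<Rightarrow> real) \<Rightarrow> 'a \<Rightarrow> real" where
  "lap f x = (\<Sum>i\<in>Basis. dpart i (dpart i f) x)"

lemma divg_grad:
  fixes f :: "'a::euclidean_space \<Rightarrow> real"
  assumes "\<And>i. i \<in> Basis \<Longrightarrow> dpart i f differentiable at x"
  shows "divg (grad f) x = lap f x"
proof -
  have "((\<lambda>y. \<Sum>i\<in>Basis. dpart i f y *\<^sub>R i) has_derivative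
      (\<lambda>v. \<Sum>i\<in>Basis. (grad (dpart i f) x \<bullet> v) *\<^sub>R i)) (at x)"
    using assms by (intro has_derivative_sum has_derivative_scaleR_left has_derivative_grad)
  then have "divg (grad f) x = (\<Sum>j\<in>Basis. grad (dpart j f) x \<bullet> j)"
    unfolding grad_def[abs_def] by (simp add: divg_eqI)
  also have "\<dots> = lap f x"
    unfolding lap_def by (rule sum.cong) (simp_all add: inner_grad_Basis)
  finally show ?thesis .
qed

lemma sigma_lap_expand:
  fixes f :: "'a::euclidean_space \<Rightarrow> real"
  assumes "\<sigma> differentiable at x" "\<And>i. i \<in> Basis \<Longrightarrow> dpart i f differentiable at x"
  shows "sigma_lap \<sigma> f x = \<sigma> x * lap f x + grad \<sigma> x \<bullet> grad f x"
  unfolding sigma_lap_def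
  using divg_scaleR[OF assms(1) differentiable_grad[OF assms(2)]] divg_grad[OF assms(2)] by simp

lemma Ck_on_lincomb:
  fixes f g :: "'a::euclidean_space \<Rightarrow> real"
  assumes "open U" "Ck_on k U f" "Ck_on k U g"
  shows "Ck_on k U (\<lambda>y. a * f y + b * g y)"
  using assms(2,3)
proof (induction k arbitrary: f g)
  case 0
  then show ?case by (simp add: continuous_on_add continuous_on_mult_left)
next
  case (Suc k)
  have "Ck_on k U (dpart i (\<lambda>y. a * f y + b * g y))" if "i \<in> Basis" for i
  proof (rule Ck_on_cong[OF assms(1) _ Suc.IH])
    show "a * dpart i f y + b * dpart i g y = dpart i (\<lambda>y. a * f y + b * g y) y" if "y \<in> U" for y
      using Suc.prems that by (simp add: dpart_lincomb)
  qed (use Suc.prems that in auto)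
  moreover have "continuous_on U (\<lambda>y. a * f y + b * g y)"
    using Suc.prems by (simp add: continuous_on_add continuous_on_mult_left)
  ultimately show ?case using Suc.prems by simp
qed

lemma Ck_on_neg:
  fixes f :: "'a::euclidean_space \<Rightarrow> real"
  assumes "open U" "Ck_on k U f"
  shows "Ck_on k U (\<lambda>y. - f y)"
  using Ck_on_lincomb[OF assms(1,2,2), of 0 "-1"] by simp

lemma sigma_lap_lincomb:
  fixes f g :: "'a::euclidean_space \<Rightarrow> real"
  assumes "open U" "x \<in> U" "\<sigma> differentiable at x" "Ck_on 2 U f" "Ck_on 2 U g"
  shows "sigma_lap \<sigma> (\<lambda>y. a * f y + b * g y) x = a * sigma_lap \<sigma> f x + b * sigma_lap \<sigma> g x"
proof -
  note df = Ck_on_2_differentiable[OF assms(4)] and dg = Ck_on_2_differentiable[OF assms(5)]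
  have "dpart i (dpart i (\<lambda>y. a * f y + b * g y)) x
      = a * dpart i (dpart i f) x + b * dpart i (dpart i g) x" if "i \<in> Basis" for i
  proof -
    have "dpart i (dpart i (\<lambda>y. a * f y + b * g y)) x
        = dpart i (\<lambda>y. a * dpart i f y + b * dpart i g y) x"
      by (rule dpart_cong_open[OF assms(1,2)]) (simp add: dpart_lincomb df dg)
    also have "\<dots> = a * dpart i (dpart i f) x + b * dpart i (dpart i g) x"
      using that assms(2) by (simp add: dpart_lincomb df dg)
    finally show ?thesis .
  qed
  then have "lap (\<lambda>y. a * f y + b * g y) x = a * lap f x + b * lap g x"
    unfolding lap_def by (simp add: sum.distrib sum_distrib_left)
  moreover have "\<And>i. i \<in> Basis \<Longrightarrow> dpart i (\<lambda>y. a * f y + b * g y) differentiable at x"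
    using Ck_on_2_differentiable[OF Ck_on_lincomb[OF assms(1,4,5)] assms(2)] by blast
  ultimately show ?thesis
    using assms(2,3) df dg
    by (simp add: sigma_lap_expand grad_lincomb algebra_simps)
qed

lemma sigma_lap_neg:
  fixes f :: "'a::euclidean_space \<Rightarrow> real"
  assumes "open U" "x \<in> U" "\<And>y. y \<in> U \<Longrightarrow> f differentiable at y"
    and "\<sigma> differentiable at x" "\<And>i. i \<in> Basis \<Longrightarrow> dpart i f differentiable at x"
  shows "sigma_lap \<sigma> (\<lambda>y. - f y) x = - sigma_lap \<sigma> f x"
proof -
  have "sigma_lap \<sigma> (\<lambda>y. - f y) x = divg (\<lambda>y. - (\<sigma> y *\<^sub>R grad f y)) x"
    unfolding sigma_lap_def by (rule divg_cong_open[OF assms(1,2)]) (simp add: grad_neg assms(3))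
  also have "\<dots> = - sigma_lap \<sigma> f x"
    unfolding sigma_lap_def using assms(4) differentiable_grad[OF assms(5)] by (simp add: divg_neg)
  finally show ?thesis .
qed

lemma has_derivative_exp_inner:
  fixes b :: "'a::euclidean_space"
  shows "((\<lambda>y. c * exp (\<gamma> * (y \<bullet> b))) has_derivative
      (\<lambda>v. c * \<gamma> * exp (\<gamma> * (x \<bullet> b)) * (v \<bullet> b))) (at x)"
  by (auto intro!: derivative_eq_intros)

lemma dpart_exp_inner:
  fixes b :: "'a::euclidean_space"
  shows "dpart i (\<lambda>y. c * exp (\<gamma> * (y \<bullet> b))) = (\<lambda>y. (c * \<gamma> * (b \<bullet> i)) * exp (\<gamma> * (y \<bullet> b)))"
proof
  fix y
  show "dpart i (\<lambda>y. c * exp (\<gamma> * (y \<bullet> b))) y = (c * \<gamma> * (b \<bullet> i)) * exp (\<gamma> * (y \<bullet> b))"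
    unfolding dpart_def frechet_derivative_at[OF has_derivative_exp_inner, symmetric]
    by (simp add: inner_commute)
qed

lemma Ck_on_exp_inner:
  fixes b :: "'a::euclidean_space"
  shows "Ck_on k U (\<lambda>y. c * exp (\<gamma> * (y \<bullet> b)))"
proof (induction k arbitrary: c)
  case 0
  show ?case by (simp, intro continuous_intros)
next
  case (Suc k)
  have "(\<lambda>y. c * exp (\<gamma> * (y \<bullet> b))) differentiable at x" for x
    using has_derivative_exp_inner unfolding differentiable_def by blast
  moreover have "continuous_on U (\<lambda>y. c * exp (\<gamma> * (y \<bullet> b)))"
    by (intro continuous_intros)
  ultimately show ?case by (simp add: dpart_exp_inner Suc.IH)
qed

text \<open>The barrier for the weak maximum principle: \<open>\<gamma>\<close> is chosen so large that the term
  \<open>\<sigma>\<gamma>\<^sup>2\<phi>\<close> dominates the first-order term \<open>\<gamma>\<phi> \<partial>\<^sub>b\<sigma>\<close>.\<close>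
lemma sigma_lap_exp_barrier_pos:
  fixes \<sigma> :: "'a::euclidean_space \<Rightarrow> real"
  assumes b: "b \<in> Basis" and "\<sigma> differentiable at x"
    and m: "0 < m" "m \<le> \<sigma> x" and B: "\<bar>dpart b \<sigma> x\<bar> \<le> B"
  shows "0 < sigma_lap \<sigma> (\<lambda>y. exp ((\<bar>B\<bar> + 1) / m * (y \<bullet> b))) x"
proof -
  define \<gamma> where "\<gamma> = (\<bar>B\<bar> + 1) / m"
  define \<phi> where "\<phi> = (\<lambda>y. exp (\<gamma> * (y \<bullet> b)))"
  have d\<phi>: "dpart i \<phi> = (\<lambda>y. (\<gamma> * (b \<bullet> i)) * \<phi> y)" for i
    using dpart_exp_inner[of i 1 \<gamma> b] by (simp add: \<phi>_def)
  have "dpart i (dpart i \<phi>) x = (b \<bullet> i) * (b \<bullet> i) * (\<gamma>\<^sup>2 * \<phi> x)" for i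
    unfolding d\<phi> unfolding \<phi>_def dpart_exp_inner by (simp add: power2_eq_square)
  then have "lap \<phi> x = (\<Sum>i\<in>Basis. (b \<bullet> i) * (b \<bullet> i)) * (\<gamma>\<^sup>2 * \<phi> x)"
    unfolding lap_def by (simp add: sum_distrib_right)
  also have "\<dots> = \<gamma>\<^sup>2 * \<phi> x"
    using b by (simp add: euclidean_inner[symmetric])
  finally have lap\<phi>: "lap \<phi> x = \<gamma>\<^sup>2 * \<phi> x" .
  have "(\<phi> has_derivative (\<lambda>v. ((\<gamma> * \<phi> x) *\<^sub>R b) \<bullet> v)) (at x)"
    using has_derivative_exp_inner[of 1 \<gamma> b x] by (simp add: \<phi>_def inner_commute)
  then have "grad \<phi> x = (\<gamma> * \<phi> x) *\<^sub>R b" by (rule grad_eqI)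
  then have "grad \<sigma> x \<bullet> grad \<phi> x = \<gamma> * \<phi> x * dpart b \<sigma> x"
    using b by (simp add: inner_grad_Basis)
  moreover have "\<And>i. dpart i \<phi> differentiable at x"
    unfolding d\<phi> unfolding \<phi>_def using has_derivative_exp_inner unfolding differentiable_def by blast
  ultimately have "sigma_lap \<sigma> \<phi> x = \<gamma> * \<phi> x * (\<gamma> * \<sigma> x + dpart b \<sigma> x)"
    using assms(2) by (simp add: sigma_lap_expand lap\<phi> power2_eq_square algebra_simps)
  moreover have "\<gamma> > 0" using m by (simp add: \<gamma>_def add_nonneg_pos)
  moreover have "\<gamma> * \<sigma> x + dpart b \<sigma> x > 0"
  proof -
    have "\<gamma> * m = \<bar>B\<bar> + 1" unfolding \<gamma>_def using m by simp
    moreover have "\<gamma> * m \<le> \<gamma> * \<sigma> x" using m(2) \<open>\<gamma> > 0\<close> by (simp add: mult_left_mono)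
    ultimately show ?thesis using B by linarith
  qed
  ultimately have "0 < sigma_lap \<sigma> \<phi> x" by (simp add: \<phi>_def)
  then show ?thesis unfolding \<phi>_def \<gamma>_def .
qed

lemma has_real_derivative_dpart_line:
  fixes f :: "'a::euclidean_space \<Rightarrow> real"
  assumes "f differentiable at (a + t *\<^sub>R v)"
  shows "((\<lambda>s. f (a + s *\<^sub>R v)) has_real_derivative dpart v f (a + t *\<^sub>R v)) (at t)"
proof -
  let ?D = "frechet_derivative f (at (a + t *\<^sub>R v))"
  have D: "(f has_derivative ?D) (at (a + t *\<^sub>R v))" using assms frechet_derivative_works by blast
  have "((\<lambda>s. a + s *\<^sub>R v) has_derivative (\<lambda>s. s *\<^sub>R v)) (at t)"
    by (auto intro!: derivative_eq_intros)
  from has_derivative_compose[OF this D]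
  have "((\<lambda>s. f (a + s *\<^sub>R v)) has_derivative (\<lambda>s. ?D (s *\<^sub>R v))) (at t)" by simp
  moreover have "(\<lambda>s. ?D (s *\<^sub>R v)) = (\<lambda>s. ?D v * s)"
    using has_derivative_linear[OF D] by (simp add: linear_scale mult.commute)
  ultimately show ?thesis unfolding has_field_derivative_def dpart_def by simp
qed

lemma dpart_dpart_nonpos_at_max:
  fixes z :: "'a::euclidean_space \<Rightarrow> real"
  assumes "open U" "x \<in> U" and max: "\<And>y. y \<in> U \<Longrightarrow> z y \<le> z x"
    and dz: "\<And>y. y \<in> U \<Longrightarrow> z differentiable at y"
    and "i \<in> Basis" "dpart i z differentiable at x" "dpart i z x = 0"
  shows "dpart i (dpart i z) x \<le> 0"
proof (rule ccontr)
  assume "\<not> ?thesis"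
  define k where "k t = dpart i z (x + t *\<^sub>R i)" for t
  have "DERIV k 0 :> dpart i (dpart i z) x"
    using has_real_derivative_dpart_line[of "dpart i z" x 0 i] assms(6) unfolding k_def by simp
  with \<open>\<not> ?thesis\<close> obtain d where d: "d > 0" "\<And>h. 0 < h \<Longrightarrow> h < d \<Longrightarrow> k 0 < k h"
    using DERIV_pos_inc_right by (metis add_0 not_le)
  obtain r where r: "r > 0" "ball x r \<subseteq> U" using assms(1,2) openE by metis
  define t where "t = min (d / 2) (r / 2)"
  have t: "0 < t" "t < d" using d r by (auto simp: t_def)
  have line_in_U: "x + s *\<^sub>R i \<in> U" if "0 \<le> s" "s \<le> t" for s
    using that r t \<open>i \<in> Basis\<close> by (auto simp: dist_norm t_def intro!: subsetD[OF r(2)])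
  have "\<And>s. 0 \<le> s \<Longrightarrow> s \<le> t \<Longrightarrow> DERIV (\<lambda>s. z (x + s *\<^sub>R i)) s :> k s"
    unfolding k_def using dz line_in_U by (blast intro: has_real_derivative_dpart_line)
  then obtain \<xi> where \<xi>: "0 < \<xi>" "\<xi> < t" "z (x + t *\<^sub>R i) - z (x + 0 *\<^sub>R i) = (t - 0) * k \<xi>"
    using MVT2[OF t(1)] by blast
  have "k \<xi> > 0" using d(2)[of \<xi>] \<xi> t assms(7) by (simp add: k_def)
  then have "0 < t * k \<xi>" using t(1) by simp
  then have "z (x + t *\<^sub>R i) > z x" using \<xi>(3) by simp
  with max line_in_U t show False by (meson less_le_not_le order_refl)
qed

lemma sigma_lap_nonpos_at_max:
  fixes z :: "'a::euclidean_space \<Rightarrow> real"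
  assumes "open U" "x \<in> U" "\<And>y. y \<in> U \<Longrightarrow> z y \<le> z x" "Ck_on 2 U z"
    and "\<sigma> differentiable at x" "0 \<le> \<sigma> x"
  shows "sigma_lap \<sigma> z x \<le> 0"
proof -
  note dz = Ck_on_2_differentiable[OF assms(4)]
  have "(\<lambda>v. grad z x \<bullet> v) = (\<lambda>v. 0)"
    using assms(3) by (intro differential_zero_maxmin[OF assms(2,1) has_derivative_grad]) (auto intro: dz assms(2))
  then have grad0: "grad z x = 0" by (metis inner_eq_zero_iff)
  have "dpart i (dpart i z) x \<le> 0" if "i \<in> Basis" for i
    using grad0 that assms(1-3) dz assms(2)
    by (intro dpart_dpart_nonpos_at_max) (auto simp flip: inner_grad_Basis)
  then have "lap z x \<le> 0" unfolding lap_def by (simp add: sum_nonpos)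
  then show ?thesis
    using assms(2,5,6) dz grad0 by (simp add: sigma_lap_expand mult_nonneg_nonpos)
qed

lemma sigma_lap_pos_max_on_frontier:
  fixes \<Omega> :: "'a::euclidean_space set" and \<sigma> z :: "'a \<Rightarrow> real"
  assumes "bounded \<Omega>" "open \<Omega>" "x \<in> closure \<Omega>"
    and "\<And>y. y \<in> \<Omega> \<Longrightarrow> \<sigma> differentiable at y" "\<And>y. y \<in> \<Omega> \<Longrightarrow> 0 \<le> \<sigma> y"
    and "Ck_on 2 \<Omega> z" "continuous_on (closure \<Omega>) z" "\<And>y. y \<in> \<Omega> \<Longrightarrow> 0 < sigma_lap \<sigma> z y"
  shows "\<exists>\<xi>\<in>frontier \<Omega>. z x \<le> z \<xi>"
proof -
  have "compact (closure \<Omega>)" using assms(1) by (simp add: compact_closure)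
  moreover have "closure \<Omega> \<noteq> {}" using assms(3) by (metis empty_iff)
  ultimately obtain xm where xm: "xm \<in> closure \<Omega>" "\<And>y. y \<in> closure \<Omega> \<Longrightarrow> z y \<le> z xm"
    using continuous_attains_sup[OF _ _ assms(7)] by blast
  have "xm \<notin> \<Omega>"
  proof
    assume "xm \<in> \<Omega>"
    have "sigma_lap \<sigma> z xm \<le> 0"
    proof (rule sigma_lap_nonpos_at_max[OF assms(2) \<open>xm \<in> \<Omega>\<close> _ assms(6)])
      show "z y \<le> z xm" if "y \<in> \<Omega>" for y using xm(2) closure_subset that by blast
    qed (fact assms(4)[OF \<open>xm \<in> \<Omega>\<close>], fact assms(5)[OF \<open>xm \<in> \<Omega>\<close>])
    with assms(8)[OF \<open>xm \<in> \<Omega>\<close>] show False by simp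
  qed
  with xm(1) assms(2) have "xm \<in> frontier \<Omega>" by (simp add: frontier_def interior_open)
  with xm(2)[OF assms(3)] show ?thesis by blast
qed

lemma sigma_lap_comparison:
  fixes \<Omega> :: "'a::euclidean_space set" and \<sigma> w1 w2 :: "'a \<Rightarrow> real"
  assumes "bounded \<Omega>" "open \<Omega>"
    and \<sigma>: "\<And>y. y \<in> \<Omega> \<Longrightarrow> \<sigma> differentiable at y" "\<And>b. b \<in> Basis \<Longrightarrow> bounded (dpart b \<sigma> ` \<Omega>)"
      "continuous_on (closure \<Omega>) \<sigma>" "\<And>y. y \<in> closure \<Omega> \<Longrightarrow> 0 < \<sigma> y"
    and w: "Ck_on 2 \<Omega> w1" "Ck_on 2 \<Omega> w2"
      "continuous_on (closure \<Omega>) w1" "continuous_on (closure \<Omega>) w2"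
    and eq: "\<And>x. x \<in> \<Omega> \<Longrightarrow> sigma_lap \<sigma> w1 x = sigma_lap \<sigma> w2 x"
    and bdry: "\<And>x. x \<in> frontier \<Omega> \<Longrightarrow> w1 x = w2 x"
    and x0: "x0 \<in> \<Omega>"
  shows "w1 x0 \<le> w2 x0"
proof (rule ccontr)
  assume "\<not> ?thesis"
  then have \<delta>: "0 < w1 x0 - w2 x0" by simp
  have cpt: "compact (closure \<Omega>)" using assms(1) by (simp add: compact_closure)
  have ne: "closure \<Omega> \<noteq> {}" using x0 closure_subset by blast
  obtain xmin where "xmin \<in> closure \<Omega>" "\<And>y. y \<in> closure \<Omega> \<Longrightarrow> \<sigma> xmin \<le> \<sigma> y"
    using continuous_attains_inf[OF cpt ne \<sigma>(3)] by blast
  then have m: "0 < \<sigma> xmin" "\<And>y. y \<in> \<Omega> \<Longrightarrow> \<sigma> xmin \<le> \<sigma> y"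
    using \<sigma>(4) closure_subset by auto
  obtain b :: 'a where b: "b \<in> Basis" using nonempty_Basis by blast
  obtain B where B: "\<And>y. y \<in> \<Omega> \<Longrightarrow> \<bar>dpart b \<sigma> y\<bar> \<le> B"
    using \<sigma>(2)[OF b] unfolding bounded_real by blast
  define \<phi> where "\<phi> = (\<lambda>y. exp ((\<bar>B\<bar> + 1) / \<sigma> xmin * (y \<bullet> b)))"
  have "continuous_on (closure \<Omega>) \<phi>" unfolding \<phi>_def by (intro continuous_intros)
  then obtain xM where xM: "\<And>y. y \<in> closure \<Omega> \<Longrightarrow> \<phi> y \<le> \<phi> xM"
    using continuous_attains_sup[OF cpt ne] by blast
  define \<epsilon> where "\<epsilon> = (w1 x0 - w2 x0) / (2 * \<phi> xM)"
  have \<epsilon>: "0 < \<epsilon>" "\<epsilon> * \<phi> xM < w1 x0 - w2 x0"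
    using \<delta> by (simp_all add: \<epsilon>_def \<phi>_def)
  define d where "d = (\<lambda>y. 1 * w1 y + (-1) * w2 y)"
  define z where "z = (\<lambda>y. 1 * d y + \<epsilon> * \<phi> y)"
  have Ck_d: "Ck_on 2 \<Omega> d" unfolding d_def using Ck_on_lincomb[OF assms(2) w(1,2)] .
  have Ck_\<phi>: "Ck_on 2 \<Omega> \<phi>"
    using Ck_on_exp_inner[of 2 \<Omega> 1 "(\<bar>B\<bar> + 1) / \<sigma> xmin" b] unfolding \<phi>_def mult_1 .
  have "0 < sigma_lap \<sigma> z y" if "y \<in> \<Omega>" for y
  proof -
    have "sigma_lap \<sigma> d y = 1 * sigma_lap \<sigma> w1 y + (-1) * sigma_lap \<sigma> w2 y"
      unfolding d_def using that \<sigma>(1) by (intro sigma_lap_lincomb[OF assms(2) _ _ w(1,2)])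
    moreover have "sigma_lap \<sigma> z y = 1 * sigma_lap \<sigma> d y + \<epsilon> * sigma_lap \<sigma> \<phi> y"
      unfolding z_def using that \<sigma>(1) by (intro sigma_lap_lincomb[OF assms(2) _ _ Ck_d Ck_\<phi>])
    ultimately have "sigma_lap \<sigma> z y = \<epsilon> * sigma_lap \<sigma> \<phi> y" using eq that by simp
    also have "\<dots> > 0"
      using sigma_lap_exp_barrier_pos[OF b \<sigma>(1) m(1) m(2) B] that \<epsilon>(1) by (simp add: \<phi>_def)
    finally show ?thesis .
  qed
  moreover have "continuous_on (closure \<Omega>) z"
    unfolding z_def d_def \<phi>_def using w(3,4) by (intro continuous_intros)
  moreover have "Ck_on 2 \<Omega> z" unfolding z_def using Ck_on_lincomb[OF assms(2) Ck_d Ck_\<phi>] .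
  ultimately have "\<exists>\<xi>\<in>frontier \<Omega>. z x0 \<le> z \<xi>"
  proof (intro sigma_lap_pos_max_on_frontier[OF assms(1,2) _ \<sigma>(1)])
    show "x0 \<in> closure \<Omega>" using x0 closure_subset by blast
    show "0 \<le> \<sigma> y" if "y \<in> \<Omega>" for y using m(1) m(2)[OF that] by linarith
  qed
  then obtain \<xi> where \<xi>: "\<xi> \<in> frontier \<Omega>" "z x0 \<le> z \<xi>" by blast
  have "z \<xi> = \<epsilon> * \<phi> \<xi>" using bdry[OF \<xi>(1)] by (simp add: z_def d_def)
  also have "\<dots> \<le> \<epsilon> * \<phi> xM"
    using xM[of \<xi>] \<xi>(1) \<epsilon>(1) by (simp add: frontier_def)
  finally have "z \<xi> \<le> \<epsilon> * \<phi> xM" .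
  moreover have "w1 x0 - w2 x0 < z x0" using \<epsilon>(1) by (simp add: z_def d_def \<phi>_def)
  ultimately show False using \<xi>(2) \<epsilon>(2) by linarith
qed

lemma dirichlet_inv_eqI:
  fixes \<Omega> :: "'a::euclidean_space set" and \<sigma> g w :: "'a \<Rightarrow> real"
  assumes "bounded \<Omega>" "open \<Omega>"
    and "\<And>y. y \<in> \<Omega> \<Longrightarrow> \<sigma> differentiable at y" "\<And>b. b \<in> Basis \<Longrightarrow> bounded (dpart b \<sigma> ` \<Omega>)"
      "continuous_on (closure \<Omega>) \<sigma>" "\<And>y. y \<in> closure \<Omega> \<Longrightarrow> 0 < \<sigma> y"
    and w: "dirichlet_sol \<Omega> \<sigma> g w"
  shows "dirichlet_inv \<Omega> \<sigma> g = w"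
proof -
  have frontier_out: "x \<notin> \<Omega>" if "x \<in> frontier \<Omega>" for x
    using that assms(2) by (simp add: frontier_def interior_open)
  have le: "w1 x \<le> w2 x"
    if w1: "dirichlet_sol \<Omega> \<sigma> g w1" and w2: "dirichlet_sol \<Omega> \<sigma> g w2" and "x \<in> \<Omega>" for w1 w2 x
  proof (rule sigma_lap_comparison[OF assms(1-6) _ _ _ _ _ _ \<open>x \<in> \<Omega>\<close>])
    show "w1 y = w2 y" if "y \<in> frontier \<Omega>" for y
      using w1 w2 frontier_out[OF that] by (simp add: dirichlet_sol_def)
  qed (use w1 w2 in \<open>simp_all add: dirichlet_sol_def\<close>)
  have "w' = w" if "dirichlet_sol \<Omega> \<sigma> g w'" for w'
  proof
    fix x
    show "w' x = w x"
    proof (cases "x \<in> \<Omega>")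
      case True
      then show ?thesis using le[OF that w True] le[OF w that True] by linarith
    qed (use that w in \<open>simp add: dirichlet_sol_def\<close>)
  qed
  with w show ?thesis unfolding dirichlet_inv_def by (rule the_equality)
qed

lemma dirichlet_sol_neg:
  fixes \<Omega> :: "'a::euclidean_space set" and \<sigma> g v :: "'a \<Rightarrow> real"
  assumes "open \<Omega>" "\<And>y. y \<in> \<Omega> \<Longrightarrow> \<sigma> differentiable at y"
    and v: "Ck_on 2 \<Omega> v" "continuous_on (closure \<Omega>) v" "\<And>x. x \<in> frontier \<Omega> \<Longrightarrow> v x = 0"
      "\<And>x. x \<in> \<Omega> \<Longrightarrow> sigma_lap \<sigma> v x = - g x"
  shows "dirichlet_sol \<Omega> \<sigma> g (\<lambda>x. if x \<in> \<Omega> then - v x else 0)"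
proof -
  let ?w = "\<lambda>x. if x \<in> \<Omega> then - v x else 0"
  have "Ck_on 2 \<Omega> ?w" by (rule Ck_on_cong[OF assms(1) _ Ck_on_neg[OF assms(1) v(1)]]) simp
  moreover have "continuous_on (closure \<Omega>) ?w"
  proof -
    have "- v x = ?w x" if "x \<in> closure \<Omega>" for x
      using that v(3)[of x] assms(1) by (simp add: frontier_def interior_open)
    then have "continuous_on (closure \<Omega>) (\<lambda>x. - v x) = continuous_on (closure \<Omega>) ?w"
      by (rule continuous_on_cong[OF refl])
    with continuous_on_minus[OF v(2)] show ?thesis by simp
  qed
  moreover have "sigma_lap \<sigma> ?w x = g x" if "x \<in> \<Omega>" for x
  proof -
    have "sigma_lap \<sigma> ?w x = sigma_lap \<sigma> (\<lambda>y. - v y) x"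
      using that by (intro sigma_lap_cong_open[OF assms(1)]) simp_all
    also have "\<dots> = g x"
      using that Ck_on_2_differentiable[OF v(1)] assms(2) v(4)
      by (simp add: sigma_lap_neg[OF assms(1)])
    finally show ?thesis .
  qed
  ultimately show ?thesis unfolding dirichlet_sol_def by simp
qed

lemma divg_scaleR_grad_of_sigma_harmonic:
  fixes \<sigma> h u :: "'a::euclidean_space \<Rightarrow> real"
  assumes "open U" "x \<in> U" "\<And>y. y \<in> U \<Longrightarrow> \<sigma> y \<noteq> 0"
    and "\<sigma> differentiable at x" "h differentiable at x"
    and "\<And>i. i \<in> Basis \<Longrightarrow> dpart i u differentiable at x"
    and "sigma_lap \<sigma> u x = 0"
  shows "divg (\<lambda>y. h y *\<^sub>R grad u y) x = \<sigma> x * (grad u x \<bullet> grad (\<lambda>z. h z / \<sigma> z) x)"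
proof -
  have "divg (\<lambda>y. h y *\<^sub>R grad u y) x = divg (\<lambda>y. (h y / \<sigma> y) *\<^sub>R (\<sigma> y *\<^sub>R grad u y)) x"
    by (rule divg_cong_open[OF assms(1,2)]) (simp add: assms(3))
  also have "\<dots> = grad (\<lambda>z. h z / \<sigma> z) x \<bullet> (\<sigma> x *\<^sub>R grad u x) + (h x / \<sigma> x) * sigma_lap \<sigma> u x"
    unfolding sigma_lap_def using assms(2-5) differentiable_grad[OF assms(6)]
    by (intro divg_scaleR) auto
  finally show ?thesis using assms(7) by (simp add: inner_commute)
qed

lemma dF_quotient_eq:
  assumes "\<sigma> y \<noteq> 0" "grad u y \<noteq> 0"
  shows "dF \<sigma> u p h v y / (\<sigma> y * norm (grad u y) powr p)
    = h y / \<sigma> y + p * ((grad u y \<bullet> grad v y) / (grad u y \<bullet> grad u y))"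
proof -
  define N where "N = norm (grad u y)"
  have "N > 0" using assms(2) by (simp add: N_def)
  moreover have "grad u y \<bullet> grad u y = N\<^sup>2" by (simp add: N_def power2_norm_eq_inner)
  moreover have "N powr (p - 2) = N powr p / N\<^sup>2" using \<open>N > 0\<close> by (simp add: powr_diff)
  ultimately show ?thesis
    unfolding dF_def N_def[symmetric] using assms(1) by (simp add: field_simps)
qed

lemma sigma_Top_dF_quotient_eq:
  fixes \<sigma> u v h :: "'a::euclidean_space \<Rightarrow> real"
  assumes U: "open U" "x \<in> U"
    and nz: "\<And>y. y \<in> U \<Longrightarrow> \<sigma> y \<noteq> 0" "\<And>y. y \<in> U \<Longrightarrow> grad u y \<noteq> 0"
    and d: "\<sigma> differentiable at x" "h differentiable at x" "\<And>y. y \<in> U \<Longrightarrow> v differentiable at y"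
      "\<And>i. i \<in> Basis \<Longrightarrow> dpart i u differentiable at x"
      "\<And>i. i \<in> Basis \<Longrightarrow> dpart i v differentiable at x"
    and u: "sigma_lap \<sigma> u x = 0"
    and v: "sigma_lap \<sigma> v x = - divg (\<lambda>y. h y *\<^sub>R grad u y) x"
  shows "\<sigma> x * Top u (\<lambda>y. dF \<sigma> u p h v y / (\<sigma> y * norm (grad u y) powr p)) x
    = - Lop \<sigma> u p (\<lambda>y. - v y) x"
proof -
  define \<rho> where "\<rho> = (\<lambda>y. h y / \<sigma> y)"
  define R where "R = (\<lambda>y. (grad u y \<bullet> grad v y) / (grad u y \<bullet> grad u y))"
  have \<rho>d: "\<rho> differentiable at x" using d(1,2) nz(1)[OF U(2)] by (simp add: \<rho>_def)
  have Rd: "R differentiable at x"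
    unfolding R_def using differentiable_grad[OF d(4)] differentiable_grad[OF d(5)] nz(2)[OF U(2)]
    by simp
  have "grad (\<lambda>y. dF \<sigma> u p h v y / (\<sigma> y * norm (grad u y) powr p)) x
      = grad (\<lambda>y. 1 * \<rho> y + p * R y) x"
    by (rule grad_cong_open[OF U]) (simp add: dF_quotient_eq nz \<rho>_def R_def)
  then have LHS: "\<sigma> x * Top u (\<lambda>y. dF \<sigma> u p h v y / (\<sigma> y * norm (grad u y) powr p)) x
      = \<sigma> x * (grad u x \<bullet> grad \<rho> x) + p * (\<sigma> x * (grad u x \<bullet> grad R x))"
    unfolding Top_def using grad_lincomb[OF \<rho>d Rd, of 1 p] by (simp add: inner_add_right algebra_simps)
  have first: "divg (\<lambda>y. \<sigma> y *\<^sub>R grad (\<lambda>y. - v y) y) x = \<sigma> x * (grad u x \<bullet> grad \<rho> x)"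
    using sigma_lap_neg[OF U d(3) d(1) d(5)] v
      divg_scaleR_grad_of_sigma_harmonic[OF U nz(1) d(1,2,4) u]
    unfolding sigma_lap_def \<rho>_def by simp
  have "divg (\<lambda>y. (\<sigma> y * (grad u y \<bullet> grad (\<lambda>y. - v y) y) / (norm (grad u y))\<^sup>2) *\<^sub>R grad u y) x
      = divg (\<lambda>y. (- R y) *\<^sub>R (\<sigma> y *\<^sub>R grad u y)) x"
    by (rule divg_cong_open[OF U]) (simp add: R_def grad_neg d(3) power2_norm_eq_inner)
  also have "\<dots> = grad (\<lambda>y. - R y) x \<bullet> (\<sigma> x *\<^sub>R grad u x) + (- R x) * sigma_lap \<sigma> u x"
    unfolding sigma_lap_def using Rd d(1) differentiable_grad[OF d(4)] by (intro divg_scaleR) simp_all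
  also have "\<dots> = - (\<sigma> x * (grad u x \<bullet> grad R x))"
    using u Rd by (simp add: grad_neg inner_commute)
  finally have second: "divg (\<lambda>y. (\<sigma> y * (grad u y \<bullet> grad (\<lambda>y. - v y) y) / (norm (grad u y))\<^sup>2)
      *\<^sub>R grad u y) x = - (\<sigma> x * (grad u x \<bullet> grad R x))" .
  show ?thesis unfolding LHS Lop_def first second by simp
qed

theorem proposition2p1:
  fixes \<Omega> :: "'a::euclidean_space set"
    and \<sigma>0 u0 v0 f h :: "'a \<Rightarrow> real"
    and p \<alpha> :: real
  assumes "bounded \<Omega>" and "open \<Omega>" and "simply_connected \<Omega>" and "smooth_boundary \<Omega>"
    and "C2_closure \<Omega> \<sigma>0" and "\<forall>x\<in>closure \<Omega>. \<sigma>0 x > 0"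
    and "0 < \<alpha>" and "\<alpha> < 1" and "C2alpha_boundary \<alpha> \<Omega> f"
    and "Ck_on 2 \<Omega> u0" and "continuous_on (closure \<Omega>) u0"
    and "\<forall>x\<in>\<Omega>. sigma_lap \<sigma>0 u0 x = 0"
    and "\<forall>x\<in>frontier \<Omega>. u0 x = f x"
    and "\<exists>G. continuous_on (closure \<Omega>) G \<and> (\<forall>x\<in>\<Omega>. G x = grad u0 x) \<and>
              (\<forall>x\<in>closure \<Omega>. G x \<noteq> 0)"
    and "p > 0"
    and "C2_closure \<Omega> h"
    and "Ck_on 2 \<Omega> v0" and "continuous_on (closure \<Omega>) v0"
    and "\<forall>x\<in>\<Omega>. sigma_lap \<sigma>0 v0 x = - divg (\<lambda>y. h y *\<^sub>R grad u0 y) x"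
    and "\<forall>x\<in>frontier \<Omega>. v0 x = 0"
  shows "\<forall>x\<in>\<Omega>.
    \<sigma>0 x * Top u0 (\<lambda>y. dF \<sigma>0 u0 p h v0 y / (\<sigma>0 y * norm (grad u0 y) powr p)) x
    = - Lop \<sigma>0 u0 p
          (dirichlet_inv \<Omega> \<sigma>0 (\<lambda>y. \<sigma>0 y * Top u0 (\<lambda>z. h z / \<sigma>0 z) y)) x"
proof -
  note \<Omega> = assms(1,2) and u0 = assms(10,12,14) and v0 = assms(17-20)
  have \<sigma>0: "\<And>y. y \<in> \<Omega> \<Longrightarrow> \<sigma>0 differentiable at y" "\<And>b. b \<in> Basis \<Longrightarrow> bounded (dpart b \<sigma>0 ` \<Omega>)"
    "continuous_on (closure \<Omega>) \<sigma>0" "\<And>y. y \<in> closure \<Omega> \<Longrightarrow> 0 < \<sigma>0 y"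
    using assms(5,6) \<Omega>(1) Ck_on_2_differentiable
    by (auto simp: C2_closure_def intro!: bounded_uniformly_continuous_image)
  have nz: "\<sigma>0 y \<noteq> 0" "grad u0 y \<noteq> 0" if "y \<in> \<Omega>" for y
    using \<sigma>0(4) u0(3) that closure_subset by (force, metis subsetD)
  have h: "\<And>y. y \<in> \<Omega> \<Longrightarrow> h differentiable at y"
    using assms(16) Ck_on_2_differentiable by (auto simp: C2_closure_def)
  have "divg (\<lambda>y. h y *\<^sub>R grad u0 y) x = \<sigma>0 x * Top u0 (\<lambda>z. h z / \<sigma>0 z) x" if "x \<in> \<Omega>" for x
    unfolding Top_def using that nz u0 Ck_on_2_differentiable[OF u0(1) that] \<sigma>0(1) h
    by (intro divg_scaleR_grad_of_sigma_harmonic[OF \<Omega>(2)]) auto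
  then have "dirichlet_inv \<Omega> \<sigma>0 (\<lambda>y. \<sigma>0 y * Top u0 (\<lambda>z. h z / \<sigma>0 z) y)
      = (\<lambda>x. if x \<in> \<Omega> then - v0 x else 0)"
    using v0 by (intro dirichlet_inv_eqI[OF \<Omega> \<sigma>0] dirichlet_sol_neg[OF \<Omega>(2) \<sigma>0(1)]) auto
  then have "Lop \<sigma>0 u0 p (dirichlet_inv \<Omega> \<sigma>0 (\<lambda>y. \<sigma>0 y * Top u0 (\<lambda>z. h z / \<sigma>0 z) y)) x
      = Lop \<sigma>0 u0 p (\<lambda>y. - v0 y) x" if "x \<in> \<Omega>" for x
    using that by (auto intro: Lop_cong_open[OF \<Omega>(2)])
  moreover have "\<sigma>0 x * Top u0 (\<lambda>y. dF \<sigma>0 u0 p h v0 y / (\<sigma>0 y * norm (grad u0 y) powr p)) x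
      = - Lop \<sigma>0 u0 p (\<lambda>y. - v0 y) x" if "x \<in> \<Omega>" for x
    using that nz h \<sigma>0(1) u0 v0 Ck_on_2_differentiable[OF u0(1)] Ck_on_2_differentiable[OF v0(1)]
    by (intro sigma_Top_dF_quotient_eq[OF \<Omega>(2)]) auto
  ultimately show ?thesis by simp
qed

end
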